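(* For each integer $k\geq2$, let $O_k=\langle x,e\mid x^k=x^{k-1}e=0,\ ex=x,\ e^2=e\rangle$. Then the pseudovariety $\llbracket O_k\rrbracket$ is not join irreducible.
   Context: All semigroups are finite; $O_k$ is the finite semigroup with zero $0$ given by the presentation. A pseudovariety is a class of finite semigroups closed under finite direct products, subsemigroups and homomorphic images; $\llbracket S\rrbracket$ is the pseudovariety generated by $S$. A pseudovariety $\mathbf{V}$ is join irreducible if for every set $\mathscr{X}$ of pseudovarieties, $\mathbf{V}\subseteq\bigvee\mathscr{X}$ implies $\mathbf{V}\subseteq\mathbf{X}$ for some $\mathbf{X}\in\mathscr{X}$. *)

theory Defs
  imports Main "HOL-Library.Nat_Bijection"
begin

text \<open>Members of pseudovarieties are represented by finite semigroups whose carrier is a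
  set of natural numbers; every finite semigroup is isomorphic to one of these.\<close>

type_synonym 'a sgr = "'a set \<times> ('a \<Rightarrow> 'a \<Rightarrow> 'a)"

definition fsg :: "'a sgr \<Rightarrow> bool" where
  "fsg S \<longleftrightarrow> finite (fst S) \<and> fst S \<noteq> {} \<and>
     (\<forall>a\<in>fst S. \<forall>b\<in>fst S. snd S a b \<in> fst S) \<and>
     (\<forall>a\<in>fst S. \<forall>b\<in>fst S. \<forall>c\<in>fst S. snd S (snd S a b) c = snd S a (snd S b c))"

definition sg_iso :: "'a sgr \<Rightarrow> 'b sgr \<Rightarrow> bool" where
  "sg_iso S T \<longleftrightarrow> (\<exists>f. bij_betw f (fst S) (fst T) \<and>
     (\<forall>a\<in>fst S. \<forall>b\<in>fst S. f (snd S a b) = snd T (f a) (f b)))"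

definition sg_prod :: "nat sgr \<Rightarrow> nat sgr \<Rightarrow> nat sgr" where
  "sg_prod S T =
    ({prod_encode (a, b) | a b. a \<in> fst S \<and> b \<in> fst T},
     (\<lambda>u v. prod_encode (snd S (fst (prod_decode u)) (fst (prod_decode v)),
                          snd T (snd (prod_decode u)) (snd (prod_decode v)))))"

definition subsg :: "nat sgr \<Rightarrow> nat sgr \<Rightarrow> bool" where
  "subsg T S \<longleftrightarrow> fsg T \<and> fst T \<subseteq> fst S \<and>
     (\<forall>a\<in>fst T. \<forall>b\<in>fst T. snd T a b = snd S a b)"

definition hom_image :: "nat sgr \<Rightarrow> nat sgr \<Rightarrow> bool" where
  "hom_image T S \<longleftrightarrow> fsg T \<and> (\<exists>h. h ` fst S = fst T \<and>
     (\<forall>a\<in>fst S. \<forall>b\<in>fst S. h (snd S a b) = snd T (h a) (h b)))"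

definition pseudovariety :: "nat sgr set \<Rightarrow> bool" where
  "pseudovariety V \<longleftrightarrow> V \<subseteq> {S. fsg S} \<and> V \<noteq> {} \<and>
     (\<forall>S\<in>V. \<forall>T\<in>V. sg_prod S T \<in> V) \<and>
     (\<forall>S\<in>V. \<forall>T. subsg T S \<longrightarrow> T \<in> V) \<and>
     (\<forall>S\<in>V. \<forall>T. hom_image T S \<longrightarrow> T \<in> V)"

definition pv_gen :: "'a sgr \<Rightarrow> nat sgr set" where
  "pv_gen S = \<Inter>{V. pseudovariety V \<and> (\<exists>T\<in>V. sg_iso S T)}"

definition pv_join :: "nat sgr set set \<Rightarrow> nat sgr set" where
  "pv_join X = \<Inter>{W. pseudovariety W \<and> \<Union>X \<subseteq> W}"

definition join_irreducible :: "nat sgr set \<Rightarrow> bool" where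
  "join_irreducible V \<longleftrightarrow>
     (\<forall>X. (\<forall>W\<in>X. pseudovariety W) \<longrightarrow> V \<subseteq> pv_join X \<longrightarrow> (\<exists>W\<in>X. V \<subseteq> W))"

inductive pres_cong :: "('g list \<times> 'g list) set \<Rightarrow> 'g list \<Rightarrow> 'g list \<Rightarrow> bool"
  for R where
  base: "(u, v) \<in> R \<Longrightarrow> pres_cong R u v"
| refl: "pres_cong R u u"
| sym: "pres_cong R u v \<Longrightarrow> pres_cong R v u"
| trans: "pres_cong R u v \<Longrightarrow> pres_cong R v w \<Longrightarrow> pres_cong R u w"
| ctxt: "pres_cong R u v \<Longrightarrow> pres_cong R (p @ u @ q) (p @ v @ q)"

definition pres_class :: "('g list \<times> 'g list) set \<Rightarrow> 'g list \<Rightarrow> 'g list set" where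
  "pres_class R w = {v. pres_cong R w v}"

definition presented :: "('g list \<times> 'g list) set \<Rightarrow> 'g list set sgr" where
  "presented R =
    ({pres_class R w | w. w \<noteq> []},
     (\<lambda>A B. pres_class R ((SOME u. u \<in> A) @ (SOME v. v \<in> B))))"

text \<open>Generators of \<open>O_k\<close>; \<open>Z\<close> is the zero (a semigroup-with-zero presentation
  \<open>\<langle>A | R\<rangle>\<close> is the semigroup presentation \<open>\<langle>A \<union> {0} | R, 0a = a0 = 0\<rangle>\<close>).\<close>
datatype gen = X | E | Z

definition O_rels :: "nat \<Rightarrow> (gen list \<times> gen list) set" where
  "O_rels k =
     {(replicate k X, [Z]), (replicate (k - 1) X @ [E], [Z]), ([E, X], [X]), ([E, E], [E])}
     \<union> {([Z, a], [Z]) | a. True} \<union> {([a, Z], [Z]) | a. True}"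

definition O_sg :: "nat \<Rightarrow> gen list set sgr" where
  "O_sg k = presented (O_rels k)"

end

theory Submission
  imports Defs
begin

text \<open>Writing \<open>x\<^sup>a e\<^sup>b\<close> (\<open>b \<le> 1\<close>) for the normal forms of \<open>O\<^sub>k\<close>, multiplication adds the
  exponents of \<open>x\<close> (truncated at \<open>k\<close>, where everything becomes \<open>0\<close>) and keeps the
  \<open>e\<close>-exponent of the right factor. So \<open>O\<^sub>k\<close> is a quotient of a subsemigroup of
  \<open>N\<^sub>k \<times> R\<close>, where \<open>N\<^sub>k\<close> is \<open>{0..k}\<close> under truncated addition and \<open>R = {0, 1}\<close> is a
  right-zero semigroup; hence \<open>\<lbrakk>O\<^sub>k\<rbrakk>\<close> lies in the join of the commutative and the right-zero
  pseudovarieties. It lies in neither of them, since \<open>ex = x \<noteq> xe\<close> and \<open>x\<^sup>2 \<noteq> x\<close>.\<close>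

lemma fsg_hom_image:
  assumes S: "fsg S" and onto: "h ` fst S = fst T"
    and hom: "\<forall>a\<in>fst S. \<forall>b\<in>fst S. h (snd S a b) = snd T (h a) (h b)"
  shows "fsg T"
proof -
  have closed: "snd S a b \<in> fst S" if "a \<in> fst S" "b \<in> fst S" for a b
    using that S unfolding fsg_def by blast
  have assoc: "snd S (snd S a b) c = snd S a (snd S b c)"
    if "a \<in> fst S" "b \<in> fst S" "c \<in> fst S" for a b c
    using that S unfolding fsg_def by blast
  have hom': "snd T (h a) (h b) = h (snd S a b)" if "a \<in> fst S" "b \<in> fst S" for a b
    using that hom by simp
  show ?thesis
    using S unfolding fsg_def onto[symmetric] by (simp add: closed assoc hom')
qed

lemma fst_sg_prod: "fst (sg_prod S T) = prod_encode ` (fst S \<times> fst T)"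
  by (auto simp: sg_prod_def)

lemma snd_sg_prod_encode:
  "snd (sg_prod S T) (prod_encode (a, b)) (prod_encode (c, d)) = prod_encode (snd S a c, snd T b d)"
  by (simp add: sg_prod_def)

lemma fsg_sg_prod:
  assumes "fsg S" "fsg T"
  shows "fsg (sg_prod S T)"
  using assms unfolding fsg_def fst_sg_prod by (auto simp: snd_sg_prod_encode)

lemma subsg_restrict:
  assumes "fsg S" "C \<subseteq> fst S" "C \<noteq> {}" "\<forall>a\<in>C. \<forall>b\<in>C. snd S a b \<in> C"
  shows "subsg (C, snd S) S"
  using assms unfolding subsg_def fsg_def by (auto intro: finite_subset) (meson subsetD)

lemma hom_image_of_common_iso:
  assumes iso1: "sg_iso S T1" and iso2: "sg_iso S T2"
    and closed: "\<forall>a\<in>fst S. \<forall>b\<in>fst S. snd S a b \<in> fst S" and "fsg T2"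
  shows "hom_image T2 T1"
proof -
  obtain f1 where f1: "bij_betw f1 (fst S) (fst T1)"
    and hom1: "\<forall>a\<in>fst S. \<forall>b\<in>fst S. f1 (snd S a b) = snd T1 (f1 a) (f1 b)"
    using iso1 unfolding sg_iso_def by blast
  obtain f2 where f2: "bij_betw f2 (fst S) (fst T2)"
    and hom2: "\<forall>a\<in>fst S. \<forall>b\<in>fst S. f2 (snd S a b) = snd T2 (f2 a) (f2 b)"
    using iso2 unfolding sg_iso_def by blast
  define g where "g = inv_into (fst S) f1"
  have g: "bij_betw g (fst T1) (fst S)"
    unfolding g_def using f1 by (rule bij_betw_inv_into)
  have g_hom: "g (snd T1 a b) = snd S (g a) (g b)" if "a \<in> fst T1" "b \<in> fst T1" for a b
  proof -
    have "g a \<in> fst S" "g b \<in> fst S" "f1 (g a) = a" "f1 (g b) = b"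
      using that g f1 unfolding g_def by (auto simp: bij_betw_def f_inv_into_f)
    then show ?thesis
      using closed hom1 f1 unfolding g_def by (metis bij_betw_inv_into_left)
  qed
  have "(f2 \<circ> g) ` fst T1 = fst T2"
    using f2 g unfolding bij_betw_def by (metis image_comp)
  moreover have "\<forall>a\<in>fst T1. \<forall>b\<in>fst T1. (f2 \<circ> g) (snd T1 a b) = snd T2 ((f2 \<circ> g) a) ((f2 \<circ> g) b)"
    using g_hom hom2 g by (simp add: bij_betwE)
  ultimately show ?thesis
    unfolding hom_image_def using \<open>fsg T2\<close> by blast
qed

lemma mem_pv_gen:
  assumes "\<forall>a\<in>fst S. \<forall>b\<in>fst S. snd S a b \<in> fst S" "sg_iso S T" "fsg T"
  shows "T \<in> pv_gen S"
  unfolding pv_gen_def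
proof
  fix V assume "V \<in> {V. pseudovariety V \<and> (\<exists>T\<in>V. sg_iso S T)}"
  then obtain T' where "pseudovariety V" "T' \<in> V" "hom_image T T'"
    using hom_image_of_common_iso assms by blast
  then show "T \<in> V"
    unfolding pseudovariety_def by blast
qed

lemma pv_gen_subset_pv_join:
  assumes "sg_iso S T" "\<And>W. pseudovariety W \<Longrightarrow> \<Union>\<W> \<subseteq> W \<Longrightarrow> T \<in> W"
  shows "pv_gen S \<subseteq> pv_join \<W>"
proof
  fix V assume V: "V \<in> pv_gen S"
  show "V \<in> pv_join \<W>"
    unfolding pv_join_def
  proof
    fix W assume "W \<in> {W. pseudovariety W \<and> \<Union>\<W> \<subseteq> W}"
    then have "W \<in> {V. pseudovariety V \<and> (\<exists>T\<in>V. sg_iso S T)}"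
      using assms by blast
    then show "V \<in> W"
      using V unfolding pv_gen_def by blast
  qed
qed

section \<open>Pseudovarieties defined by identities\<close>

datatype 'v sg_term = Var 'v | Mul "'v sg_term" "'v sg_term"

primrec sg_eval :: "'a sgr \<Rightarrow> ('v \<Rightarrow> 'a) \<Rightarrow> 'v sg_term \<Rightarrow> 'a" where
  "sg_eval S \<rho> (Var v) = \<rho> v"
| "sg_eval S \<rho> (Mul s t) = snd S (sg_eval S \<rho> s) (sg_eval S \<rho> t)"

definition sg_models :: "('v sg_term \<times> 'v sg_term) set \<Rightarrow> nat sgr set" where
  "sg_models \<Sigma> = {S. fsg S \<and>
     (\<forall>(s, t)\<in>\<Sigma>. \<forall>\<rho>. range \<rho> \<subseteq> fst S \<longrightarrow> sg_eval S \<rho> s = sg_eval S \<rho> t)}"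

lemma sg_eval_in_carrier:
  assumes "fsg S" "range \<rho> \<subseteq> fst S"
  shows "sg_eval S \<rho> t \<in> fst S"
  using assms unfolding fsg_def by (induction t) auto

lemma sg_eval_sg_prod:
  "sg_eval (sg_prod S T) \<rho> t =
     prod_encode (sg_eval S (fst \<circ> prod_decode \<circ> \<rho>) t, sg_eval T (snd \<circ> prod_decode \<circ> \<rho>) t)"
  by (induction t) (simp_all add: sg_prod_def)

lemma sg_eval_subsg:
  assumes "subsg T S" "range \<rho> \<subseteq> fst T"
  shows "sg_eval T \<rho> t = sg_eval S \<rho> t"
proof (induction t)
  case (Mul s t)
  have "sg_eval T \<rho> s \<in> fst T" "sg_eval T \<rho> t \<in> fst T"
    using assms sg_eval_in_carrier unfolding subsg_def by blast+
  then have "snd T (sg_eval T \<rho> s) (sg_eval T \<rho> t) = snd S (sg_eval T \<rho> s) (sg_eval T \<rho> t)"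
    using assms(1) unfolding subsg_def by blast
  then show ?case
    using Mul.IH by simp
qed simp

lemma sg_eval_hom:
  assumes "fsg S" "range \<rho> \<subseteq> fst S"
    and hom: "\<forall>a\<in>fst S. \<forall>b\<in>fst S. h (snd S a b) = snd T (h a) (h b)"
  shows "h (sg_eval S \<rho> t) = sg_eval T (h \<circ> \<rho>) t"
  using assms sg_eval_in_carrier[OF assms(1,2)] by (induction t) auto

lemma pseudovariety_sg_models:
  fixes \<Sigma> :: "('v sg_term \<times> 'v sg_term) set"
  shows "pseudovariety (sg_models \<Sigma>)"
  unfolding pseudovariety_def
proof (intro conjI ballI allI impI)
  show "sg_models \<Sigma> \<subseteq> {S. fsg S}"
    by (auto simp: sg_models_def)
  have "sg_eval ({0::nat}, \<lambda>_ _. 0) \<rho> t = 0" if "range \<rho> \<subseteq> {0}" for \<rho> and t :: "'v sg_term"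
    using that by (induction t) auto
  then have "({0}, \<lambda>_ _. 0) \<in> sg_models \<Sigma>"
    unfolding sg_models_def fsg_def by auto
  then show "sg_models \<Sigma> \<noteq> {}"
    by blast
next
  fix S T assume S: "S \<in> sg_models \<Sigma>" and T: "T \<in> sg_models \<Sigma>"
  have "sg_eval (sg_prod S T) \<rho> s = sg_eval (sg_prod S T) \<rho> t"
    if "(s, t) \<in> \<Sigma>" "range \<rho> \<subseteq> fst (sg_prod S T)" for s t \<rho>
  proof -
    have "range (fst \<circ> prod_decode \<circ> \<rho>) \<subseteq> fst S" "range (snd \<circ> prod_decode \<circ> \<rho>) \<subseteq> fst T"
      using that(2) unfolding fst_sg_prod by auto
    then show ?thesis
      using that(1) S T unfolding sg_models_def sg_eval_sg_prod by fastforce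
  qed
  then show "sg_prod S T \<in> sg_models \<Sigma>"
    using S T fsg_sg_prod unfolding sg_models_def by blast
next
  fix S T assume S: "S \<in> sg_models \<Sigma>" and T: "subsg T S"
  have "sg_eval T \<rho> s = sg_eval T \<rho> t" if "(s, t) \<in> \<Sigma>" "range \<rho> \<subseteq> fst T" for s t \<rho>
  proof -
    have "range \<rho> \<subseteq> fst S"
      using that(2) T unfolding subsg_def by blast
    then have "sg_eval S \<rho> s = sg_eval S \<rho> t"
      using S that(1) unfolding sg_models_def by blast
    then show ?thesis
      using sg_eval_subsg[OF T that(2)] by simp
  qed
  then show "T \<in> sg_models \<Sigma>"
    using T unfolding sg_models_def subsg_def by blast
next
  fix S T assume S: "S \<in> sg_models \<Sigma>" and T: "hom_image T S"
  obtain h where onto: "h ` fst S = fst T"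
    and hom: "\<forall>a\<in>fst S. \<forall>b\<in>fst S. h (snd S a b) = snd T (h a) (h b)"
    using T unfolding hom_image_def by blast
  have "sg_eval T \<rho> s = sg_eval T \<rho> t" if "(s, t) \<in> \<Sigma>" "range \<rho> \<subseteq> fst T" for s t \<rho>
  proof -
    define \<rho>' where "\<rho>' = inv_into (fst S) h \<circ> \<rho>"
    have \<rho>': "range \<rho>' \<subseteq> fst S" "h \<circ> \<rho>' = \<rho>"
      using that(2) onto unfolding \<rho>'_def
      by (auto simp: inv_into_into fun_eq_iff) (metis f_inv_into_f rangeI subsetD)
    have "sg_eval S \<rho>' s = sg_eval S \<rho>' t"
      using S that(1) \<rho>'(1) unfolding sg_models_def by blast
    then show ?thesis
      using sg_eval_hom[OF _ \<rho>'(1) hom] S \<rho>'(2) unfolding sg_models_def by (metis (mono_tags) mem_Collect_eq)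
  qed
  moreover have "fsg T"
    using T unfolding hom_image_def by blast
  ultimately show "T \<in> sg_models \<Sigma>"
    unfolding sg_models_def by blast
qed

definition commutative_pv :: "nat sgr set" where
  "commutative_pv = sg_models {(Mul (Var 0) (Var 1), Mul (Var 1) (Var (0::nat)))}"

definition right_zero_pv :: "nat sgr set" where
  "right_zero_pv = sg_models {(Mul (Var 0) (Var 1), Var (1::nat))}"

lemma mem_commutative_pv:
  "S \<in> commutative_pv \<longleftrightarrow> fsg S \<and> (\<forall>a\<in>fst S. \<forall>b\<in>fst S. snd S a b = snd S b a)"
proof -
  have "(\<forall>\<rho>. range \<rho> \<subseteq> fst S \<longrightarrow> snd S (\<rho> 0) (\<rho> 1) = snd S (\<rho> 1) (\<rho> (0::nat))) \<longleftrightarrow>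
      (\<forall>a\<in>fst S. \<forall>b\<in>fst S. snd S a b = snd S b a)"
  proof
    assume H: "\<forall>\<rho>. range \<rho> \<subseteq> fst S \<longrightarrow> snd S (\<rho> 0) (\<rho> 1) = snd S (\<rho> 1) (\<rho> (0::nat))"
    show "\<forall>a\<in>fst S. \<forall>b\<in>fst S. snd S a b = snd S b a"
    proof (intro ballI)
      fix a b assume "a \<in> fst S" "b \<in> fst S"
      then show "snd S a b = snd S b a"
        using H[rule_format, of "\<lambda>v. if v = 0 then a else b"] by auto
    qed
  qed (simp add: image_subset_iff)
  then show ?thesis
    by (simp add: commutative_pv_def sg_models_def)
qed

lemma mem_right_zero_pv:
  "S \<in> right_zero_pv \<longleftrightarrow> fsg S \<and> (\<forall>a\<in>fst S. \<forall>b\<in>fst S. snd S a b = b)"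
proof -
  have "(\<forall>\<rho>. range \<rho> \<subseteq> fst S \<longrightarrow> snd S (\<rho> 0) (\<rho> 1) = \<rho> (1::nat)) \<longleftrightarrow>
      (\<forall>a\<in>fst S. \<forall>b\<in>fst S. snd S a b = b)"
  proof
    assume H: "\<forall>\<rho>. range \<rho> \<subseteq> fst S \<longrightarrow> snd S (\<rho> 0) (\<rho> 1) = \<rho> (1::nat)"
    show "\<forall>a\<in>fst S. \<forall>b\<in>fst S. snd S a b = b"
    proof (intro ballI)
      fix a b assume "a \<in> fst S" "b \<in> fst S"
      then show "snd S a b = b"
        using H[rule_format, of "\<lambda>v. if v = 0 then a else b"] by auto
    qed
  qed (simp add: image_subset_iff)
  then show ?thesis
    by (simp add: right_zero_pv_def sg_models_def)
qed

section \<open>Presented semigroups\<close>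

lemma pres_cong_Nil_iff:
  assumes "\<forall>(u, v)\<in>R. u \<noteq> [] \<and> v \<noteq> []" "pres_cong R u v"
  shows "u = [] \<longleftrightarrow> v = []"
  using assms(2,1) by induction auto

lemma pres_class_eq: "pres_cong R u v \<Longrightarrow> pres_class R u = pres_class R v"
  unfolding pres_class_def using pres_cong.sym pres_cong.trans by blast

lemma pres_cong_some_pres_class: "pres_cong R w (SOME u. u \<in> pres_class R w)"
proof -
  have "w \<in> pres_class R w"
    by (simp add: pres_class_def pres_cong.refl)
  then show ?thesis
    unfolding pres_class_def by (metis mem_Collect_eq someI)
qed

lemma presented_closed:
  assumes "\<forall>(u, v)\<in>R. u \<noteq> [] \<and> v \<noteq> []"
  shows "\<forall>A\<in>fst (presented R). \<forall>B\<in>fst (presented R). snd (presented R) A B \<in> fst (presented R)"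
  using pres_cong_Nil_iff[OF assms pres_cong_some_pres_class]
  by (auto simp: presented_def)

lemma presented_iso:
  fixes \<phi> :: "'g list \<Rightarrow> 'a" and nf :: "'a \<Rightarrow> 'g list"
  assumes nonempty: "\<forall>(u, v)\<in>R. u \<noteq> [] \<and> v \<noteq> []"
    and eval_in: "\<And>w. w \<noteq> [] \<Longrightarrow> \<phi> w \<in> C"
    and eval_append: "\<And>u v. u \<noteq> [] \<Longrightarrow> v \<noteq> [] \<Longrightarrow> \<phi> (u @ v) = m (\<phi> u) (\<phi> v)"
    and eval_cong: "\<And>u v. pres_cong R u v \<Longrightarrow> u \<noteq> [] \<Longrightarrow> \<phi> u = \<phi> v"
    and nf_eval: "\<And>c. c \<in> C \<Longrightarrow> nf c \<noteq> [] \<and> \<phi> (nf c) = c"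
    and cong_nf: "\<And>w. w \<noteq> [] \<Longrightarrow> pres_cong R w (nf (\<phi> w))"
  shows "sg_iso (presented R) (C, m)"
proof -
  define f where "f A = \<phi> (SOME u. u \<in> A)" for A
  have f_class: "f (pres_class R w) = \<phi> w" "(SOME u. u \<in> pres_class R w) \<noteq> []"
    if "w \<noteq> []" for w
    using that eval_cong pres_cong_some_pres_class pres_cong_Nil_iff[OF nonempty]
    unfolding f_def by metis+
  have carrier: "fst (presented R) = pres_class R ` {w. w \<noteq> []}"
    by (auto simp: presented_def)
  have "inj_on f (fst (presented R))"
  proof (rule inj_onI)
    fix A B assume "A \<in> fst (presented R)" "B \<in> fst (presented R)" "f A = f B"
    then obtain u v where u: "u \<noteq> []" "A = pres_class R u" and v: "v \<noteq> []" "B = pres_class R v"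
      and "\<phi> u = \<phi> v"
      unfolding carrier using f_class by auto
    then have "pres_cong R u v"
      using cong_nf[OF u(1)] cong_nf[OF v(1)] pres_cong.sym pres_cong.trans by metis
    then show "A = B"
      using u v pres_class_eq by simp
  qed
  moreover have "f ` fst (presented R) = C"
  proof
    show "f ` fst (presented R) \<subseteq> C"
      unfolding carrier using f_class eval_in by auto
    show "C \<subseteq> f ` fst (presented R)"
    proof
      fix c assume "c \<in> C"
      then have "pres_class R (nf c) \<in> fst (presented R)" "f (pres_class R (nf c)) = c"
        using nf_eval f_class unfolding carrier by auto
      then show "c \<in> f ` fst (presented R)"
        by (metis image_eqI)
    qed
  qed
  moreover have "f (snd (presented R) A B) = m (f A) (f B)"
    if "A \<in> fst (presented R)" "B \<in> fst (presented R)" for A B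
  proof -
    define u v where "u = (SOME u. u \<in> A)" and "v = (SOME v. v \<in> B)"
    have "u \<noteq> []" "v \<noteq> []" "f A = \<phi> u" "f B = \<phi> v"
      using that f_class unfolding carrier u_def v_def f_def by auto
    then have "f (snd (presented R) A B) = \<phi> (u @ v)"
      using f_class[of "u @ v"] by (simp add: presented_def u_def v_def)
    with \<open>f A = \<phi> u\<close> \<open>f B = \<phi> v\<close> show ?thesis
      using eval_append \<open>u \<noteq> []\<close> \<open>v \<noteq> []\<close> by simp
  qed
  ultimately show ?thesis
    unfolding sg_iso_def bij_betw_def by auto
qed

section \<open>A concrete model of \<open>O\<^sub>k\<close>\<close>

text \<open>\<open>Ok_code k a e\<close> codes \<open>x\<^sup>a\<close> followed by \<open>e\<close> if \<open>e\<close> holds, as \<open>2a + 1\<close> resp. \<open>2a\<close>, and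
  \<open>0\<close> codes the zero. The pair \<open>(0, False)\<close>, the empty word, is not an element of \<open>O\<^sub>k\<close>,
  so its clash with the zero is harmless.\<close>
definition Ok_code :: "nat \<Rightarrow> nat \<Rightarrow> bool \<Rightarrow> nat" where
  "Ok_code k a e = (if k \<le> a \<or> (a = k - 1 \<and> e) then 0 else 2 * a + of_bool e)"

definition Ok_mult :: "nat \<Rightarrow> nat \<Rightarrow> nat \<Rightarrow> nat" where
  "Ok_mult k c d = (if c = 0 \<or> d = 0 then 0 else Ok_code k (c div 2 + d div 2) (odd d))"

definition Ok_model :: "nat \<Rightarrow> nat sgr" where
  "Ok_model k = ({Ok_code k a e | a e. a \<le> k \<and> (a, e) \<noteq> (0, False)}, Ok_mult k)"

lemma Ok_code_div_mod:
  assumes "Ok_code k a e \<noteq> 0"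
  shows "Ok_code k a e div 2 = a" "odd (Ok_code k a e) = e"
  using assms by (auto simp: Ok_code_def)

lemma Ok_mult_Ok_code:
  assumes "(i, r) \<noteq> (0, False)" "(j, s) \<noteq> (0, False)"
  shows "Ok_mult k (Ok_code k i r) (Ok_code k j s) = Ok_code k (i + j) s"
  using assms Ok_code_div_mod[of k i r] Ok_code_div_mod[of k j s]
  by (auto simp: Ok_mult_def Ok_code_def)

lemma Ok_code_in_Ok_model: "a \<le> k \<Longrightarrow> (a, e) \<noteq> (0, False) \<Longrightarrow> Ok_code k a e \<in> fst (Ok_model k)"
  by (simp add: Ok_model_def) blast

lemma Ok_code_min: "Ok_code k (min k a) e = Ok_code k a e"
  by (simp add: Ok_code_def min_def)

definition trunc_add_sg :: "nat \<Rightarrow> nat sgr" where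
  "trunc_add_sg k = ({..k}, \<lambda>i j. min k (i + j))"

definition right_zero_sg :: "nat sgr" where
  "right_zero_sg = ({0, 1}, \<lambda>a b. b)"

lemma trunc_add_sg_commutative: "trunc_add_sg k \<in> commutative_pv"
  unfolding mem_commutative_pv by (auto simp: fsg_def trunc_add_sg_def min_def)

lemma right_zero_sg_right_zero: "right_zero_sg \<in> right_zero_pv"
  unfolding mem_right_zero_pv by (auto simp: fsg_def right_zero_sg_def)

text \<open>The pair \<open>(0, 0)\<close> must be left out: it is an identity of the product, whereas its
  code \<open>0\<close> is the zero of \<open>Ok_model k\<close>.\<close>
definition Ok_cover :: "nat \<Rightarrow> nat sgr" where
  "Ok_cover k =
    ({prod_encode (a, b) | a b. a \<le> k \<and> b \<le> 1 \<and> (a, b) \<noteq> (0, 0)},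
     snd (sg_prod (trunc_add_sg k) right_zero_sg))"

lemma subsg_Ok_cover: "subsg (Ok_cover k) (sg_prod (trunc_add_sg k) right_zero_sg)"
proof -
  have "fsg (sg_prod (trunc_add_sg k) right_zero_sg)"
    using trunc_add_sg_commutative right_zero_sg_right_zero
    by (simp add: fsg_sg_prod mem_commutative_pv mem_right_zero_pv)
  moreover have "prod_encode (0, 1) \<in> fst (Ok_cover k)"
    by (auto simp: Ok_cover_def)
  ultimately show ?thesis
    unfolding Ok_cover_def
    by (intro subsg_restrict)
      (auto simp: fst_sg_prod snd_sg_prod_encode trunc_add_sg_def right_zero_sg_def)
qed

lemma hom_image_Ok_cover: "hom_image (Ok_model k) (Ok_cover k)"
proof -
  define h where "h u = Ok_code k (fst (prod_decode u)) (snd (prod_decode u) = 1)" for u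
  have onto: "h ` fst (Ok_cover k) = fst (Ok_model k)"
  proof
    show "h ` fst (Ok_cover k) \<subseteq> fst (Ok_model k)"
      using Ok_code_in_Ok_model by (force simp: Ok_cover_def h_def)
    show "fst (Ok_model k) \<subseteq> h ` fst (Ok_cover k)"
    proof
      fix c assume "c \<in> fst (Ok_model k)"
      then obtain a e where "c = Ok_code k a e" "a \<le> k" "(a, e) \<noteq> (0, False)"
        by (auto simp: Ok_model_def)
      then have "prod_encode (a, of_bool e) \<in> fst (Ok_cover k)" "c = h (prod_encode (a, of_bool e))"
        by (auto simp: Ok_cover_def h_def)
      then show "c \<in> h ` fst (Ok_cover k)"
        by blast
    qed
  qed
  have hom: "\<forall>u\<in>fst (Ok_cover k). \<forall>v\<in>fst (Ok_cover k).
      h (snd (Ok_cover k) u v) = snd (Ok_model k) (h u) (h v)"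
    by (auto simp: Ok_cover_def Ok_model_def h_def snd_sg_prod_encode trunc_add_sg_def
        right_zero_sg_def Ok_mult_Ok_code Ok_code_min)
  have "fsg (Ok_cover k)"
    using subsg_Ok_cover by (simp add: subsg_def)
  then show ?thesis
    unfolding hom_image_def using onto hom fsg_hom_image by blast
qed

lemma fsg_Ok_model: "fsg (Ok_model k)"
  using hom_image_Ok_cover by (simp add: hom_image_def)

lemma Ok_model_in_join:
  assumes "pseudovariety W" "commutative_pv \<union> right_zero_pv \<subseteq> W"
  shows "Ok_model k \<in> W"
proof -
  have "sg_prod (trunc_add_sg k) right_zero_sg \<in> W"
    using assms trunc_add_sg_commutative right_zero_sg_right_zero
    unfolding pseudovariety_def by blast
  then have "Ok_cover k \<in> W"
    using assms(1) subsg_Ok_cover unfolding pseudovariety_def by blast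
  then show ?thesis
    using assms(1) hom_image_Ok_cover unfolding pseudovariety_def by blast
qed

lemma Ok_model_not_commutative:
  assumes "2 \<le> k"
  shows "Ok_model k \<notin> commutative_pv"
proof -
  have "Ok_code k 0 True \<in> fst (Ok_model k)" "Ok_code k 1 False \<in> fst (Ok_model k)"
    using assms by (simp_all add: Ok_code_in_Ok_model)
  moreover have "Ok_mult k (Ok_code k 0 True) (Ok_code k 1 False) \<noteq>
      Ok_mult k (Ok_code k 1 False) (Ok_code k 0 True)"
    using assms by (simp add: Ok_mult_Ok_code) (simp add: Ok_code_def)
  ultimately show ?thesis
    unfolding mem_commutative_pv by (auto simp: Ok_model_def)
qed

lemma Ok_model_not_right_zero:
  assumes "2 \<le> k"
  shows "Ok_model k \<notin> right_zero_pv"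
proof -
  have "Ok_code k 1 False \<in> fst (Ok_model k)"
    using assms by (simp add: Ok_code_in_Ok_model)
  moreover have "Ok_mult k (Ok_code k 1 False) (Ok_code k 1 False) \<noteq> Ok_code k 1 False"
    using assms by (simp add: Ok_mult_Ok_code) (simp add: Ok_code_def)
  ultimately show ?thesis
    unfolding mem_right_zero_pv by (auto simp: Ok_model_def)
qed

section \<open>Normal forms in \<open>O\<^sub>k\<close>\<close>

definition Ok_eval :: "nat \<Rightarrow> gen list \<Rightarrow> nat" where
  "Ok_eval k w = (if Z \<in> set w then 0 else Ok_code k (count_list w X) (last w = E))"

definition Ok_word :: "nat \<Rightarrow> bool \<Rightarrow> gen list" where
  "Ok_word a e = replicate a X @ (if e then [E] else [])"

definition Ok_nf :: "nat \<Rightarrow> gen list" where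
  "Ok_nf c = (if c = 0 then [Z] else Ok_word (c div 2) (odd c))"

lemma count_list_replicate_self [simp]: "count_list (replicate n x) x = n"
  by (induction n) auto

lemma O_rels_nonempty: "1 \<le> k \<Longrightarrow> \<forall>(u, v)\<in>O_rels k. u \<noteq> [] \<and> v \<noteq> []"
  by (auto simp: O_rels_def)

lemma Z_free_word_nonempty:
  assumes "w \<noteq> []" "Z \<notin> set w"
  shows "(count_list w X, last w = E) \<noteq> (0, False)"
proof
  assume "(count_list w X, last w = E) = (0, False)"
  then have "X \<notin> set w" "last w \<noteq> E"
    by (auto simp: count_list_0_iff)
  moreover have "last w \<in> set w"
    using assms(1) by simp
  ultimately show False
    using assms(2) by (cases "last w") auto
qed

lemma Ok_eval_append:
  assumes "u \<noteq> []" "v \<noteq> []"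
  shows "Ok_eval k (u @ v) = Ok_mult k (Ok_eval k u) (Ok_eval k v)"
proof (cases "Z \<in> set u \<or> Z \<in> set v")
  case True
  then show ?thesis
    by (auto simp: Ok_eval_def Ok_mult_def)
next
  case False
  then have "Ok_eval k (u @ v) = Ok_code k (count_list u X + count_list v X) (last v = E)"
    using assms(2) by (simp add: Ok_eval_def)
  also have "\<dots> = Ok_mult k (Ok_eval k u) (Ok_eval k v)"
    using False assms Z_free_word_nonempty[of u] Z_free_word_nonempty[of v]
    by (simp add: Ok_eval_def Ok_mult_Ok_code)
  finally show ?thesis .
qed

lemma Ok_eval_in_Ok_model:
  assumes "w \<noteq> []"
  shows "Ok_eval k w \<in> fst (Ok_model k)"
proof (cases "Z \<in> set w \<or> k \<le> count_list w X")
  case True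
  then have "Ok_eval k w = Ok_code k k True"
    by (auto simp: Ok_eval_def Ok_code_def)
  then show ?thesis
    by (simp add: Ok_code_in_Ok_model)
next
  case False
  then show ?thesis
    using assms Z_free_word_nonempty[of w] by (simp add: Ok_eval_def Ok_code_in_Ok_model)
qed

lemma Ok_nf_Ok_eval:
  assumes "c \<in> fst (Ok_model k)"
  shows "Ok_nf c \<noteq> [] \<and> Ok_eval k (Ok_nf c) = c"
proof -
  obtain a e where c: "c = Ok_code k a e" "(a, e) \<noteq> (0, False)"
    using assms by (auto simp: Ok_model_def)
  show ?thesis
  proof (cases "c = 0")
    case False
    then have "Ok_nf c = Ok_word a e" "Ok_code k a e = c"
      using c Ok_code_div_mod[of k a e] by (auto simp: Ok_nf_def)
    moreover have "Z \<notin> set (Ok_word a e)" "count_list (Ok_word a e) X = a"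
      "last (Ok_word a e) = E \<longleftrightarrow> e" "Ok_word a e \<noteq> []"
      using c(2) by (auto simp: Ok_word_def)
    ultimately show ?thesis
      by (simp add: Ok_eval_def)
  qed (simp add: Ok_nf_def Ok_eval_def)
qed

lemma Ok_eval_O_rels:
  assumes "2 \<le> k" "(u, v) \<in> O_rels k"
  shows "Ok_eval k u = Ok_eval k v"
proof -
  have "Ok_eval k (replicate k X) = 0" "Ok_eval k (replicate (k - 1) X @ [E]) = 0"
    using assms(1) by (simp_all add: Ok_eval_def Ok_code_def)
  then show ?thesis
    using assms(2) by (auto simp: O_rels_def Ok_eval_def)
qed

lemma Ok_eval_cong:
  assumes "2 \<le> k" "pres_cong (O_rels k) u v" "u \<noteq> []"
  shows "Ok_eval k u = Ok_eval k v"
proof -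
  have Nil_iff: "a = [] \<longleftrightarrow> b = []" if "pres_cong (O_rels k) a b" for a b
    using pres_cong_Nil_iff[OF O_rels_nonempty that] assms(1) by simp
  show ?thesis
    using assms(2,3)
  proof induction
    case (base u v)
    then show ?case
      using Ok_eval_O_rels[OF assms(1)] by blast
  next
    case (sym u v)
    then show ?case
      using Nil_iff by metis
  next
    case (trans u v w)
    then show ?case
      using Nil_iff by metis
  next
    case (ctxt u v p q)
    then have "u \<noteq> [] \<and> v \<noteq> [] \<or> u = [] \<and> v = []"
      using Nil_iff by blast
    then show ?case
      using ctxt.IH by (cases "p = []"; cases "q = []") (auto simp: Ok_eval_append)
  qed simp
qed

lemma O_cong_rel:
  "(u, v) \<in> O_rels k \<Longrightarrow> pres_cong (O_rels k) (p @ u @ q) (p @ v @ q)"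
  by (intro pres_cong.ctxt pres_cong.base)

lemma O_cong_Z_left: "pres_cong (O_rels k) (Z # w) [Z]"
proof (induction w)
  case (Cons g w)
  have "pres_cong (O_rels k) ([] @ [Z, g] @ w) ([] @ [Z] @ w)"
    by (rule O_cong_rel) (simp add: O_rels_def)
  then show ?case
    using Cons.IH pres_cong.trans by fastforce
qed (rule pres_cong.refl)

lemma O_cong_Z_right: "pres_cong (O_rels k) (w @ [Z]) [Z]"
proof (induction w)
  case (Cons g w)
  have "pres_cong (O_rels k) ([g] @ (w @ [Z]) @ []) ([g] @ [Z] @ [])"
    using Cons.IH by (rule pres_cong.ctxt)
  moreover have "pres_cong (O_rels k) ([] @ [g, Z] @ []) ([] @ [Z] @ [])"
    by (rule O_cong_rel) (simp add: O_rels_def)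
  ultimately show ?case
    using pres_cong.trans by fastforce
qed (simp add: pres_cong.refl)

lemma O_cong_Z:
  assumes "Z \<in> set w"
  shows "pres_cong (O_rels k) w [Z]"
proof -
  obtain p q where w: "w = p @ Z # q"
    using assms split_list by metis
  have "pres_cong (O_rels k) (p @ (Z # q) @ []) (p @ [Z] @ [])"
    using O_cong_Z_left by (rule pres_cong.ctxt)
  then show ?thesis
    using w O_cong_Z_right pres_cong.trans by fastforce
qed

lemma Z_free_cong_Ok_word:
  assumes "w \<noteq> []" "Z \<notin> set w"
  shows "pres_cong (O_rels k) w (Ok_word (count_list w X) (last w = E))"
  using assms
proof (induction w)
  case (Cons g w)
  show ?case
  proof (cases "w = []")
    case True
    with Cons.prems show ?thesis
      by (cases g) (auto simp: Ok_word_def pres_cong.refl)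
  next
    case False
    define n e where "n = count_list w X" and "e = (last w = E)"
    have "pres_cong (O_rels k) (g # w) (g # Ok_word n e)"
      using pres_cong.ctxt[OF Cons.IH, of "[g]" "[]"] False Cons.prems unfolding n_def e_def by simp
    moreover have "pres_cong (O_rels k) (g # Ok_word n e) (Ok_word (count_list (g # w) X) e)"
    proof (cases g)
      case X
      then show ?thesis
        by (simp add: Ok_word_def n_def pres_cong.refl)
    next
      case E
      show ?thesis
      proof (cases n)
        case 0
        then have "e"
          using Z_free_word_nonempty[of w] False Cons.prems unfolding n_def e_def by simp
        then show ?thesis
          using E 0 O_cong_rel[of "[E, E]" "[E]" k "[]" "[]"] by (simp add: Ok_word_def n_def O_rels_def)
      next
        case (Suc m)
        then show ?thesis
          using E O_cong_rel[of "[E, X]" "[X]" k "[]" "replicate m X @ (if e then [E] else [])"]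
          by (simp add: Ok_word_def n_def O_rels_def)
      qed
    next
      case Z
      then show ?thesis
        using Cons.prems by simp
    qed
    ultimately have "pres_cong (O_rels k) (g # w) (Ok_word (count_list (g # w) X) e)"
      by (rule pres_cong.trans)
    with False show ?thesis
      by (simp add: e_def)
  qed
qed simp

lemma Ok_word_cong_Ok_nf:
  assumes "2 \<le> k" "(a, e) \<noteq> (0, False)"
  shows "pres_cong (O_rels k) (Ok_word a e) (Ok_nf (Ok_code k a e))"
proof (cases "k \<le> a")
  case True
  define r where "r = replicate (a - k) X @ (if e then [E] else [])"
  have "Ok_word a e = [] @ replicate k X @ r"
    using True by (simp add: Ok_word_def r_def flip: replicate_add)
  then have "pres_cong (O_rels k) (Ok_word a e) ([] @ [Z] @ r)"
    using O_cong_rel[of "replicate k X" "[Z]" k "[]" r] by (simp add: O_rels_def)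
  moreover have "pres_cong (O_rels k) ([] @ [Z] @ r) [Z]"
    using O_cong_Z_left by simp
  ultimately have "pres_cong (O_rels k) (Ok_word a e) [Z]"
    by (rule pres_cong.trans)
  with True show ?thesis
    by (simp add: Ok_code_def Ok_nf_def)
next
  case False
  show ?thesis
  proof (cases "a = k - 1 \<and> e")
    case True
    then show ?thesis
      using False O_cong_rel[of "replicate (k - 1) X @ [E]" "[Z]" k "[]" "[]"]
      by (simp add: Ok_word_def Ok_code_def Ok_nf_def O_rels_def)
  next
    case False
    then have "Ok_nf (Ok_code k a e) = Ok_word a e"
      using \<open>\<not> k \<le> a\<close> assms(2) Ok_code_div_mod[of k a e] by (auto simp: Ok_nf_def Ok_code_def)
    then show ?thesis
      by (simp add: pres_cong.refl)
  qed
qed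

lemma cong_Ok_nf_Ok_eval:
  assumes "2 \<le> k" "w \<noteq> []"
  shows "pres_cong (O_rels k) w (Ok_nf (Ok_eval k w))"
proof (cases "Z \<in> set w")
  case True
  then show ?thesis
    using O_cong_Z by (simp add: Ok_eval_def Ok_nf_def)
next
  case False
  have "pres_cong (O_rels k) w (Ok_word (count_list w X) (last w = E))"
    using assms(2) False by (rule Z_free_cong_Ok_word)
  moreover have "pres_cong (O_rels k) (Ok_word (count_list w X) (last w = E))
      (Ok_nf (Ok_code k (count_list w X) (last w = E)))"
    using assms Z_free_word_nonempty False by (intro Ok_word_cong_Ok_nf) auto
  ultimately have "pres_cong (O_rels k) w (Ok_nf (Ok_code k (count_list w X) (last w = E)))"
    by (rule pres_cong.trans)
  with False show ?thesis
    by (simp add: Ok_eval_def)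
qed

lemma O_sg_iso_Ok_model:
  assumes "2 \<le> k"
  shows "sg_iso (O_sg k) (Ok_model k)"
proof -
  have "sg_iso (presented (O_rels k)) (fst (Ok_model k), Ok_mult k)"
    by (rule presented_iso[OF O_rels_nonempty Ok_eval_in_Ok_model Ok_eval_append
          Ok_eval_cong[OF assms] Ok_nf_Ok_eval cong_Ok_nf_Ok_eval[OF assms]])
      (use assms in simp)
  then show ?thesis
    by (simp add: O_sg_def Ok_model_def)
qed

theorem proposition4p15:
  fixes k :: nat
  assumes "k \<ge> 2"
  shows "\<not> join_irreducible (pv_gen (O_sg k))"
proof
  assume irreducible: "join_irreducible (pv_gen (O_sg k))"
  have iso: "sg_iso (O_sg k) (Ok_model k)"
    using assms by (rule O_sg_iso_Ok_model)
  have "\<forall>a\<in>fst (O_sg k). \<forall>b\<in>fst (O_sg k). snd (O_sg k) a b \<in> fst (O_sg k)"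
    unfolding O_sg_def using assms by (intro presented_closed O_rels_nonempty) simp
  then have generator: "Ok_model k \<in> pv_gen (O_sg k)"
    using iso fsg_Ok_model by (rule mem_pv_gen)
  have "\<forall>W\<in>{commutative_pv, right_zero_pv}. pseudovariety W"
    by (simp add: commutative_pv_def right_zero_pv_def pseudovariety_sg_models)
  moreover have "pv_gen (O_sg k) \<subseteq> pv_join {commutative_pv, right_zero_pv}"
    by (rule pv_gen_subset_pv_join[OF iso]) (rule Ok_model_in_join; simp)
  ultimately have "\<exists>W\<in>{commutative_pv, right_zero_pv}. pv_gen (O_sg k) \<subseteq> W"
    using spec[OF irreducible[unfolded join_irreducible_def], of "{commutative_pv, right_zero_pv}"]
    by blast
  then show False
    using generator Ok_model_not_commutative[OF assms] Ok_model_not_right_zero[OF assms] by blast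
qed

end
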